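(* Let $\lambda_1,\lambda_2,\sigma_1,\sigma_2\in\mathbb{C}^*$ and $\eta_1,\eta_2\in\mathbb{C}$ with $\lambda_1\neq\lambda_2$. Then the $\mathcal{G}$-submodule of $\Omega(\lambda_1,\eta_1,\sigma_1,0)\otimes\Omega(\lambda_2,\eta_2,0,\sigma_2)$ generated by $1\otimes 1$ is the whole module $\Omega(\lambda_1,\eta_1,\sigma_1,0)\otimes\Omega(\lambda_2,\eta_2,0,\sigma_2)$.
   Context: The planar Galilean conformal algebra $\mathcal{G}$ is the complex Lie algebra with basis $\{L_m,H_m,I_m,J_m\mid m\in\mathbb{Z}\}$ and brackets $[L_m,L_n]=(n-m)L_{m+n}$, $[L_m,H_n]=nH_{m+n}$, $[L_m,I_n]=(n-m)I_{m+n}$, $[L_m,J_n]=(n-m)J_{m+n}$, $[H_m,I_n]=I_{m+n}$, $[H_m,J_n]=-J_{m+n}$, and $[H_m,H_n]=[I_m,I_n]=[J_m,J_n]=[I_m,J_n]=0$ for all $m,n\in\mathbb{Z}$. For $\lambda,\sigma\in\mathbb{C}^*$, $\eta\in\mathbb{C}$, the module $\Omega(\lambda,\eta,\sigma,0)$ is $\mathbb{C}[X,Y]$ with $L_m f(X,Y)=\lambda^m(Y-mX+m\eta)f(X,Y-m)$, $H_m f(X,Y)=\lambda^m X f(X,Y-m)$, $I_m f(X,Y)=\lambda^m\sigma f(X-1,Y-m)$, $J_m f(X,Y)=0$. The module $\Omega(\lambda,\eta,0,\sigma)$ is $\mathbb{C}[S,T]$ with $L_m f(S,T)=\lambda^m(T+mS+m\eta)f(S,T-m)$,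 $H_m f(S,T)=\lambda^m S f(S,T-m)$, $I_m f(S,T)=0$, $J_m f(S,T)=\lambda^m\sigma f(S+1,T-m)$. The tensor product of $\mathcal{G}$-modules has action $x(v\otimes w)=xv\otimes w+v\otimes xw$. *)

theory Defs
  imports Complex_Main
begin

text \<open>Elements of the tensor product C[X,Y] (x) C[S,T] are identified with polynomials
  in C[X,Y,S,T] (f (x) g corresponds to f*g), represented as polynomial functions
  of four complex variables X Y S T (argument order).\<close>

type_synonym pfun4 = "complex \<Rightarrow> complex \<Rightarrow> complex \<Rightarrow> complex \<Rightarrow> complex"

inductive_set poly4 :: "pfun4 set" where
  const: "(\<lambda>x y s t. c) \<in> poly4"
| varX: "(\<lambda>x y s t. x) \<in> poly4"
| varY: "(\<lambda>x y s t. y) \<in> poly4"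
| varS: "(\<lambda>x y s t. s) \<in> poly4"
| varT: "(\<lambda>x y s t. t) \<in> poly4"
| add: "f \<in> poly4 \<Longrightarrow> g \<in> poly4 \<Longrightarrow> (\<lambda>x y s t. f x y s t + g x y s t) \<in> poly4"
| mult: "f \<in> poly4 \<Longrightarrow> g \<in> poly4 \<Longrightarrow> (\<lambda>x y s t. f x y s t * g x y s t) \<in> poly4"

text \<open>Action of G on Omega(l1,e1,s1,0) (x) Omega(l2,e2,0,s2): x(v(x)w) = xv(x)w + v(x)xw.\<close>

definition actL :: "complex \<Rightarrow> complex \<Rightarrow> complex \<Rightarrow> complex \<Rightarrow> int \<Rightarrow> pfun4 \<Rightarrow> pfun4" where
  "actL l1 e1 l2 e2 m F = (\<lambda>x y s t.
     l1 powi m * (y - of_int m * x + of_int m * e1) * F x (y - of_int m) s t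
   + l2 powi m * (t + of_int m * s + of_int m * e2) * F x y s (t - of_int m))"

definition actH :: "complex \<Rightarrow> complex \<Rightarrow> int \<Rightarrow> pfun4 \<Rightarrow> pfun4" where
  "actH l1 l2 m F = (\<lambda>x y s t.
     l1 powi m * x * F x (y - of_int m) s t
   + l2 powi m * s * F x y s (t - of_int m))"

definition actI :: "complex \<Rightarrow> complex \<Rightarrow> int \<Rightarrow> pfun4 \<Rightarrow> pfun4" where
  "actI l1 s1 m F = (\<lambda>x y s t. l1 powi m * s1 * F (x - 1) (y - of_int m) s t + 0)"

definition actJ :: "complex \<Rightarrow> complex \<Rightarrow> int \<Rightarrow> pfun4 \<Rightarrow> pfun4" where
  "actJ l2 s2 m F = (\<lambda>x y s t. 0 + l2 powi m * s2 * F x y (s + 1) (t - of_int m))"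

inductive_set gen_submod ::
  "complex \<Rightarrow> complex \<Rightarrow> complex \<Rightarrow> complex \<Rightarrow> complex \<Rightarrow> complex \<Rightarrow> pfun4 \<Rightarrow> pfun4 set"
  for l1 e1 s1 l2 e2 s2 :: complex and v :: pfun4 where
  base: "v \<in> gen_submod l1 e1 s1 l2 e2 s2 v"
| zero: "(\<lambda>x y s t. 0) \<in> gen_submod l1 e1 s1 l2 e2 s2 v"
| add: "F \<in> gen_submod l1 e1 s1 l2 e2 s2 v \<Longrightarrow> G \<in> gen_submod l1 e1 s1 l2 e2 s2 v \<Longrightarrow>
        (\<lambda>x y s t. F x y s t + G x y s t) \<in> gen_submod l1 e1 s1 l2 e2 s2 v"
| smult: "F \<in> gen_submod l1 e1 s1 l2 e2 s2 v \<Longrightarrow>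
        (\<lambda>x y s t. c * F x y s t) \<in> gen_submod l1 e1 s1 l2 e2 s2 v"
| L: "F \<in> gen_submod l1 e1 s1 l2 e2 s2 v \<Longrightarrow> actL l1 e1 l2 e2 m F \<in> gen_submod l1 e1 s1 l2 e2 s2 v"
| H: "F \<in> gen_submod l1 e1 s1 l2 e2 s2 v \<Longrightarrow> actH l1 l2 m F \<in> gen_submod l1 e1 s1 l2 e2 s2 v"
| I: "F \<in> gen_submod l1 e1 s1 l2 e2 s2 v \<Longrightarrow> actI l1 s1 m F \<in> gen_submod l1 e1 s1 l2 e2 s2 v"
| J: "F \<in> gen_submod l1 e1 s1 l2 e2 s2 v \<Longrightarrow> actJ l2 s2 m F \<in> gen_submod l1 e1 s1 l2 e2 s2 v"

end

theory Submission
  imports Defs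
begin

(* Let M be the submodule generated by 1.  Since H_0 1 = X + S and H_1 1 = l1 X + l2 S with
   l1 \<noteq> l2, M contains X and S.  Multiplication by X commutes with L_m, H_m, J_m and with I_m up
   to adding I_m itself (symmetrically for S), so M is stable under multiplication by X and S.
   For Y and T induct on the total degree in Y and T: L_0 G = (Y + T) G, while L_1 G differs from
   l1 Y G + l2 T G by a polynomial whose degree in Y, T does not exceed that of G, and l1 \<noteq> l2
   again separates Y G from T G. *)

lemma poly4_diff:
  "f \<in> poly4 \<Longrightarrow> g \<in> poly4 \<Longrightarrow> (\<lambda>x y s t. f x y s t - g x y s t) \<in> poly4"
  using poly4.add[OF _ poly4.mult[OF poly4.const[of "-1"]], of f g] by simp

lemma poly4_compose:
  assumes "F \<in> poly4" and "P \<in> poly4" "Q \<in> poly4" "R \<in> poly4" "S \<in> poly4"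
  shows "(\<lambda>x y s t. F (P x y s t) (Q x y s t) (R x y s t) (S x y s t)) \<in> poly4"
  using assms(1) by induction (auto intro: poly4.intros assms)

lemma gen_submod_subset_poly4:
  assumes "v \<in> poly4"
  shows "gen_submod l1 e1 s1 l2 e2 s2 v \<subseteq> poly4"
proof
  fix F assume "F \<in> gen_submod l1 e1 s1 l2 e2 s2 v"
  then show "F \<in> poly4"
  proof induction
    case (L F m)
    have "(\<lambda>x y s t. F x (y - of_int m) s t) \<in> poly4"
         "(\<lambda>x y s t. F x y s (t - of_int m)) \<in> poly4"
      by (rule poly4_compose[OF L.IH]; intro poly4.intros poly4_diff)+
    then show ?case
      unfolding actL_def by (intro poly4.intros poly4_diff)
  next
    case (H F m)
    have "(\<lambda>x y s t. F x (y - of_int m) s t) \<in> poly4"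
         "(\<lambda>x y s t. F x y s (t - of_int m)) \<in> poly4"
      by (rule poly4_compose[OF H.IH]; intro poly4.intros poly4_diff)+
    then show ?case
      unfolding actH_def by (intro poly4.intros)
  next
    case (I F m)
    have "(\<lambda>x y s t. F (x - 1) (y - of_int m) s t) \<in> poly4"
      by (rule poly4_compose[OF I.IH]; intro poly4.intros poly4_diff)
    then show ?case
      unfolding actI_def by (intro poly4.intros)
  next
    case (J F m)
    have "(\<lambda>x y s t. F x y (s + 1) (t - of_int m)) \<in> poly4"
      by (rule poly4_compose[OF J.IH]; intro poly4.intros poly4_diff)
    then show ?case
      unfolding actJ_def by (intro poly4.intros)
  qed (auto intro: poly4.intros assms)
qed

inductive degYT_le :: "nat \<Rightarrow> pfun4 \<Rightarrow> bool" where
  const: "degYT_le n (\<lambda>x y s t. c)"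
| multX: "degYT_le n F \<Longrightarrow> degYT_le n (\<lambda>x y s t. x * F x y s t)"
| multS: "degYT_le n F \<Longrightarrow> degYT_le n (\<lambda>x y s t. s * F x y s t)"
| multY: "degYT_le n F \<Longrightarrow> degYT_le (Suc n) (\<lambda>x y s t. y * F x y s t)"
| multT: "degYT_le n F \<Longrightarrow> degYT_le (Suc n) (\<lambda>x y s t. t * F x y s t)"
| add: "degYT_le n F \<Longrightarrow> degYT_le n G \<Longrightarrow>
        degYT_le n (\<lambda>x y s t. F x y s t + G x y s t)"
| smult: "degYT_le n F \<Longrightarrow> degYT_le n (\<lambda>x y s t. c * F x y s t)"
| Suc: "degYT_le n F \<Longrightarrow> degYT_le (Suc n) F"

lemma degYT_le_mono: "degYT_le m F \<Longrightarrow> m \<le> n \<Longrightarrow> degYT_le n F"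
  by (induction n) (auto simp: le_Suc_eq intro: degYT_le.Suc)

lemma degYT_le_diff:
  "degYT_le n F \<Longrightarrow> degYT_le n G \<Longrightarrow>
    degYT_le n (\<lambda>x y s t. F x y s t - G x y s t)"
  using degYT_le.add[OF _ degYT_le.smult[where c="-1"]] by fastforce

lemma degYT_le_mult:
  assumes "degYT_le m F" and "degYT_le n G"
  shows "degYT_le (m + n) (\<lambda>x y s t. F x y s t * G x y s t)"
  using assms(1)
proof induction
  case (const m c)
  show ?case
    using degYT_le_mono[OF degYT_le.smult[OF assms(2), of c]] by simp
next
  case (add m F F')
  then show ?case using degYT_le.add[OF add.IH] by (simp add: distrib_right)
qed (simp_all add: mult.assoc degYT_le.intros)

lemma poly4_in_degYT_le: "F \<in> poly4 \<Longrightarrow> \<exists>n. degYT_le n F"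
proof (induction rule: poly4.induct)
  case (const c)
  show ?case using degYT_le.const by blast
next
  case varX
  show ?case using degYT_le.multX[OF degYT_le.const[of 0 1]] by auto
next
  case varY
  show ?case using degYT_le.multY[OF degYT_le.const[of 0 1]] by auto
next
  case varS
  show ?case using degYT_le.multS[OF degYT_le.const[of 0 1]] by auto
next
  case varT
  show ?case using degYT_le.multT[OF degYT_le.const[of 0 1]] by auto
next
  case (add F G)
  then obtain m n where "degYT_le m F" "degYT_le n G" by blast
  then have "degYT_le (m + n) F" "degYT_le (m + n) G"
    by (auto intro: degYT_le_mono)
  then show ?case by (blast intro: degYT_le.add)
next
  case (mult F G)
  then show ?case by (blast intro: degYT_le_mult)
qed

lemma degYT_le_swap:
  "degYT_le n F \<Longrightarrow> degYT_le n (\<lambda>x y s t. F s t x y)"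
  by (induction rule: degYT_le.induct) (auto intro: degYT_le.intros)

definition diffY :: "pfun4 \<Rightarrow> pfun4" where
  "diffY F = (\<lambda>x y s t. F x (y - 1) s t - F x y s t)"

definition diffT :: "pfun4 \<Rightarrow> pfun4" where
  "diffT F = (\<lambda>x y s t. F x y s (t - 1) - F x y s t)"

lemma diffT_swap: "diffT F = (\<lambda>x y s t. diffY (\<lambda>x y s t. F s t x y) s t x y)"
  by (simp add: diffT_def diffY_def)

lemma diffY_add:
  "diffY (\<lambda>x y s t. F x y s t + G x y s t) = (\<lambda>x y s t. diffY F x y s t + diffY G x y s t)"
  by (simp add: diffY_def fun_eq_iff)

lemma diffY_mult_Y_free:
  "diffY (\<lambda>x y s t. P x s t * F x y s t) = (\<lambda>x y s t. P x s t * diffY F x y s t)"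
  by (simp add: diffY_def fun_eq_iff right_diff_distrib)

lemma diffY_multY:
  "diffY (\<lambda>x y s t. y * F x y s t) =
    (\<lambda>x y s t. y * diffY F x y s t - (F x y s t + diffY F x y s t))"
  by (simp add: diffY_def fun_eq_iff algebra_simps)

lemma degYT_le_diffY:
  assumes "degYT_le n F"
  shows "degYT_le n (diffY F) \<and> degYT_le n (\<lambda>x y s t. diffY F x y s t * y)"
  using assms
proof induction
  case (const n c)
  then show ?case using degYT_le.const[of n 0] by (simp add: diffY_def)
next
  case (multY n F)
  have "(\<lambda>x y s t. diffY (\<lambda>x y s t. y * F x y s t) x y s t * y) =
      (\<lambda>x y s t. y * (diffY F x y s t * y) - (y * F x y s t + diffY F x y s t * y))"
    by (simp add: diffY_multY algebra_simps)
  with multY show ?case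
    by (simp add: diffY_multY degYT_le_diff degYT_le.add degYT_le.multY degYT_le.Suc)
next
  case (add n F G)
  then show ?case by (simp add: diffY_add distrib_right degYT_le.add)
qed (simp_all add: diffY_mult_Y_free mult.assoc degYT_le.intros)

lemma degYT_le_diffT:
  assumes "degYT_le n F"
  shows "degYT_le n (diffT F) \<and> degYT_le n (\<lambda>x y s t. diffT F x y s t * t)"
proof -
  from degYT_le_diffY[OF degYT_le_swap[OF assms]]
  have "degYT_le n (diffY (\<lambda>x y s t. F s t x y))"
    "degYT_le n (\<lambda>x y s t. diffY (\<lambda>x y s t. F s t x y) x y s t * y)"
    by blast+
  from this[THEN degYT_le_swap] show ?thesis
    by (simp add: diffT_swap)
qed

lemma gen_submod_lincomb:
  assumes "F \<in> gen_submod l1 e1 s1 l2 e2 s2 v" "G \<in> gen_submod l1 e1 s1 l2 e2 s2 v"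
  shows "(\<lambda>x y s t. a * F x y s t + b * G x y s t) \<in> gen_submod l1 e1 s1 l2 e2 s2 v"
  using assms by (intro gen_submod.add gen_submod.smult)

lemma gen_submod_separate:
  fixes a b :: complex
  assumes "a \<noteq> b"
    and comb: "(\<lambda>x y s t. a * U x y s t + b * V x y s t) \<in> gen_submod l1 e1 s1 l2 e2 s2 v"
    and sum: "(\<lambda>x y s t. U x y s t + V x y s t) \<in> gen_submod l1 e1 s1 l2 e2 s2 v"
  shows "U \<in> gen_submod l1 e1 s1 l2 e2 s2 v" "V \<in> gen_submod l1 e1 s1 l2 e2 s2 v"
proof -
  have "(\<lambda>x y s t. 1 / (a - b) * (1 * (a * U x y s t + b * V x y s t) + (- b) * (U x y s t + V x y s t)))
      \<in> gen_submod l1 e1 s1 l2 e2 s2 v"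
   and "(\<lambda>x y s t. 1 / (b - a) * (1 * (a * U x y s t + b * V x y s t) + (- a) * (U x y s t + V x y s t)))
      \<in> gen_submod l1 e1 s1 l2 e2 s2 v"
    by (rule gen_submod.smult gen_submod_lincomb[OF comb sum])+
  moreover have "1 / (a - b) * (1 * (a * u + b * w) + (- b) * (u + w)) = u"
    and "1 / (b - a) * (1 * (a * u + b * w) + (- a) * (u + w)) = w" for u w
    using assms(1) by (simp_all add: divide_simps) (simp_all add: algebra_simps)
  ultimately show "U \<in> gen_submod l1 e1 s1 l2 e2 s2 v" "V \<in> gen_submod l1 e1 s1 l2 e2 s2 v"
    by simp_all
qed

lemma gen_submod_multX:
  assumes "(\<lambda>x y s t. x * v x y s t) \<in> gen_submod l1 e1 s1 l2 e2 s2 v"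
    and "F \<in> gen_submod l1 e1 s1 l2 e2 s2 v"
  shows "(\<lambda>x y s t. x * F x y s t) \<in> gen_submod l1 e1 s1 l2 e2 s2 v"
  using assms(2)
proof induction
  case base
  show ?case by (rule assms(1))
next
  case zero
  show ?case using gen_submod.zero by simp
next
  case (add F G)
  then show ?case using gen_submod.add[OF add.IH] by (simp add: algebra_simps)
next
  case (smult F c)
  then show ?case using gen_submod.smult[OF smult.IH, of c] by (simp add: algebra_simps)
next
  case (L F m)
  then show ?case using gen_submod.L[OF L.IH, of m] by (simp add: actL_def algebra_simps)
next
  case (H F m)
  then show ?case using gen_submod.H[OF H.IH, of m] by (simp add: actH_def algebra_simps)
next
  case (I F m)
  then show ?case
    using gen_submod.add[OF gen_submod.I[OF I.IH, of m] gen_submod.I[OF I.hyps, of m]]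
    by (simp add: actI_def algebra_simps)
next
  case (J F m)
  then show ?case using gen_submod.J[OF J.IH, of m] by (simp add: actJ_def algebra_simps)
qed

lemma gen_submod_multS:
  assumes "(\<lambda>x y s t. s * v x y s t) \<in> gen_submod l1 e1 s1 l2 e2 s2 v"
    and "F \<in> gen_submod l1 e1 s1 l2 e2 s2 v"
  shows "(\<lambda>x y s t. s * F x y s t) \<in> gen_submod l1 e1 s1 l2 e2 s2 v"
  using assms(2)
proof induction
  case base
  show ?case by (rule assms(1))
next
  case zero
  show ?case using gen_submod.zero by simp
next
  case (add F G)
  then show ?case using gen_submod.add[OF add.IH] by (simp add: algebra_simps)
next
  case (smult F c)
  then show ?case using gen_submod.smult[OF smult.IH, of c] by (simp add: algebra_simps)
next
  case (L F m)
  then show ?case using gen_submod.L[OF L.IH, of m] by (simp add: actL_def algebra_simps)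
next
  case (H F m)
  then show ?case using gen_submod.H[OF H.IH, of m] by (simp add: actH_def algebra_simps)
next
  case (I F m)
  then show ?case using gen_submod.I[OF I.IH, of m] by (simp add: actI_def algebra_simps)
next
  case (J F m)
  then show ?case
    using gen_submod_lincomb[OF gen_submod.J[OF J.IH, of m] gen_submod.J[OF J.hyps, of m], of 1 "-1"]
    by (simp add: actJ_def algebra_simps)
qed

lemma X_S_in_gen_submod_one:
  assumes "l1 \<noteq> l2"
  shows "(\<lambda>x y s t. x) \<in> gen_submod l1 e1 s1 l2 e2 s2 (\<lambda>x y s t. 1)"
    and "(\<lambda>x y s t. s) \<in> gen_submod l1 e1 s1 l2 e2 s2 (\<lambda>x y s t. 1)"
proof -
  have "actH l1 l2 1 (\<lambda>x y s t. 1) \<in> gen_submod l1 e1 s1 l2 e2 s2 (\<lambda>x y s t. 1)"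
    and "actH l1 l2 0 (\<lambda>x y s t. 1) \<in> gen_submod l1 e1 s1 l2 e2 s2 (\<lambda>x y s t. 1)"
    by (intro gen_submod.H gen_submod.base)+
  then have "(\<lambda>x y s t. l1 * x + l2 * s) \<in> gen_submod l1 e1 s1 l2 e2 s2 (\<lambda>x y s t. 1)"
    and "(\<lambda>x y s t. x + s) \<in> gen_submod l1 e1 s1 l2 e2 s2 (\<lambda>x y s t. 1)"
    by (simp_all add: actH_def)
  from gen_submod_separate[OF assms this]
  show "(\<lambda>x y s t. x) \<in> gen_submod l1 e1 s1 l2 e2 s2 (\<lambda>x y s t. 1)"
    and "(\<lambda>x y s t. s) \<in> gen_submod l1 e1 s1 l2 e2 s2 (\<lambda>x y s t. 1)"
    by simp_all
qed

lemma gen_submod_multYT: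
  assumes "l1 \<noteq> l2"
    and deg_n: "\<And>H. degYT_le n H \<Longrightarrow> H \<in> gen_submod l1 e1 s1 l2 e2 s2 v"
    and G: "degYT_le n G"
  shows "(\<lambda>x y s t. y * G x y s t) \<in> gen_submod l1 e1 s1 l2 e2 s2 v"
    and "(\<lambda>x y s t. t * G x y s t) \<in> gen_submod l1 e1 s1 l2 e2 s2 v"
proof -
  \<comment> \<open>\<open>L\<^sub>1 G - l1 Y G - l2 T G\<close>, written via differences so that its degree bound is visible\<close>
  define D where "D = (\<lambda>x y s t.
      l1 * (diffY G x y s t * y) + l1 * e1 * (G x y s t + diffY G x y s t)
    - l1 * (x * (G x y s t + diffY G x y s t))
    + l2 * (diffT G x y s t * t) + l2 * e2 * (G x y s t + diffT G x y s t)
    + l2 * (s * (G x y s t + diffT G x y s t)))"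
  have "degYT_le n D"
    using degYT_le_diffY[OF G] degYT_le_diffT[OF G] G unfolding D_def
    by (intro degYT_le.add degYT_le_diff degYT_le.smult degYT_le.multX degYT_le.multS) auto
  then have "(\<lambda>x y s t. 1 * actL l1 e1 l2 e2 1 G x y s t + (-1) * D x y s t)
      \<in> gen_submod l1 e1 s1 l2 e2 s2 v"
    by (intro gen_submod_lincomb gen_submod.L deg_n G)
  moreover have "actL l1 e1 l2 e2 0 G \<in> gen_submod l1 e1 s1 l2 e2 s2 v"
    by (intro gen_submod.L deg_n G)
  moreover have "actL l1 e1 l2 e2 1 G = (\<lambda>x y s t. D x y s t + l1 * (y * G x y s t) + l2 * (t * G x y s t))"
    and "actL l1 e1 l2 e2 0 G = (\<lambda>x y s t. y * G x y s t + t * G x y s t)"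
    by (simp_all add: actL_def D_def diffY_def diffT_def fun_eq_iff algebra_simps)
  ultimately have "(\<lambda>x y s t. l1 * (y * G x y s t) + l2 * (t * G x y s t)) \<in> gen_submod l1 e1 s1 l2 e2 s2 v"
    and "(\<lambda>x y s t. y * G x y s t + t * G x y s t) \<in> gen_submod l1 e1 s1 l2 e2 s2 v"
    by simp_all
  from gen_submod_separate[OF assms(1) this]
  show "(\<lambda>x y s t. y * G x y s t) \<in> gen_submod l1 e1 s1 l2 e2 s2 v"
    and "(\<lambda>x y s t. t * G x y s t) \<in> gen_submod l1 e1 s1 l2 e2 s2 v"
    by simp_all
qed

lemma degYT_le_in_gen_submod:
  assumes "l1 \<noteq> l2" and "degYT_le n F"
  shows "F \<in> gen_submod l1 e1 s1 l2 e2 s2 (\<lambda>x y s t. 1)"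
  using assms(2)
proof (induction n arbitrary: F rule: less_induct)
  case (less n)
  have lower: "\<forall>m<n. \<forall>H. degYT_le m H \<longrightarrow> H \<in> gen_submod l1 e1 s1 l2 e2 s2 (\<lambda>x y s t. 1)"
    using less.IH by blast
  from less.prems lower show ?case
  proof induction
    case (const n c)
    have "(\<lambda>x y s t. c * 1) \<in> gen_submod l1 e1 s1 l2 e2 s2 (\<lambda>x y s t. 1)"
      by (rule gen_submod.smult[OF gen_submod.base])
    then show ?case by simp
  next
    case (multX n F)
    then show ?case
      using gen_submod_multX[of "\<lambda>x y s t. 1"] X_S_in_gen_submod_one(1)[OF assms(1)] by simp
  next
    case (multS n F)
    then show ?case
      using gen_submod_multS[of "\<lambda>x y s t. 1"] X_S_in_gen_submod_one(2)[OF assms(1)] by simp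
  next
    case (multY n F)
    then show ?case using gen_submod_multYT(1)[OF assms(1)] by blast
  next
    case (multT n F)
    then show ?case using gen_submod_multYT(2)[OF assms(1)] by blast
  next
    case (add n F G)
    then show ?case by (simp add: gen_submod.add)
  next
    case (smult n F c)
    then show ?case by (simp add: gen_submod.smult)
  next
    case (Suc n F)
    then show ?case using less_SucI by blast
  qed
qed

theorem proposition3p2:
  fixes l1 l2 s1 s2 e1 e2 :: complex
  assumes "l1 \<noteq> 0" "l2 \<noteq> 0" "s1 \<noteq> 0" "s2 \<noteq> 0" "l1 \<noteq> l2"
  shows "gen_submod l1 e1 s1 l2 e2 s2 (\<lambda>x y s t. 1) = poly4"
proof
  show "gen_submod l1 e1 s1 l2 e2 s2 (\<lambda>x y s t. 1) \<subseteq> poly4"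
    by (rule gen_submod_subset_poly4) (rule poly4.const)
  show "poly4 \<subseteq> gen_submod l1 e1 s1 l2 e2 s2 (\<lambda>x y s t. 1)"
    using poly4_in_degYT_le degYT_le_in_gen_submod[OF assms(5)] by blast
qed

end
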